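(* Let $(V_{1},V_{2})$ be a pair of commuting isometries on a Hilbert space $\mathcal{H}$ with defect zero, i.e. $C(V_1,V_2)=0$. Let $(\mathcal{E},P,U)$ be the BCL triple for $(V_{1},V_{2})$. Let $\mathcal{E}_1= \operatorname{ran} P$ and $\mathcal{E}_2 = \operatorname{ran} P^\perp $. Then $\mathcal{E}_1,\mathcal{E}_2$ are reducing subspaces for $U$, i.e., $$\mathcal{E}=\mathcal{E}_1\oplus\mathcal{E}_2, \ U=\begin{pmatrix} U_1 & 0 \\ 0 & U_2 \end{pmatrix} \text{ and } P=\begin{pmatrix} I_{\mathcal{E}_1} & 0 \\ 0 & 0 \end{pmatrix}\text{ in } \mathcal{B}(\mathcal{E}_1\oplus \mathcal{E}_2)$$ for some unitaries $U_1$ and $U_2$ on $\mathcal{E}_1$ and $\mathcal{E}_2$ respectively. Also $\mathcal{H}=(H^2_{\mathbb{D}}\otimes \mathcal{E}_1) \oplus (H^2_{\mathbb{D}}\otimes \mathcal{E}_2) \oplus \mathcal{K}$ and in this decomposition, $$V_1= \begin{pmatrix} M_z\otimes I_{\mathcal{E}_1}& 0&0\\ 0& I_{H^2_{\mathbb{D}}}\otimes U_2^* & 0\\ 0&0&W_1 \end{pmatrix}, \quad V_2= \begin{pmatrix} I_{H^2_{\mathbb{D}}}\otimes U_1 & 0&0\\ 0& M_z\otimes I_{\mathcal{E}_2} & 0\\ 0&0&W_2 \end{pmatrix},$$ up to unitary equivalence, for some unitary $U_i$ on $\mathcal{E}_i, i=1,2$ and commuting unitaries $W_1, W_2$ on 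$\mathcal{K}$.
   Context: For commuting isometries $V_1,V_2$ on $\mathcal{H}$, the defect operator is $C(V_1,V_2)=I-V_1V_1^*-V_2V_2^*+V_1V_2V_2^*V_1^*$. $H^2_{\mathbb{D}}$ is the Hardy space of scalar-valued functions on the unit disc $\mathbb{D}$, $M_z$ is multiplication by the coordinate function $z$ on it, and $H^2_{\mathbb{D}}(\mathcal{E})$ is identified with $H^2_{\mathbb{D}}\otimes\mathcal{E}$. By the Berger–Coburn–Lebow theorem, up to unitary equivalence $\mathcal{H}=\mathcal{H}_p\oplus\mathcal{H}_u$ with both summands reducing, where there is a unique (up to unitary equivalence) triple $(\mathcal{E},P,U)$ consisting of a Hilbert space $\mathcal{E}$ (namely $\ker (V_1V_2)^*$), a projection $P$ on $\mathcal{E}$ and a unitary $U$ on $\mathcal{E}$, such that $\mathcal{H}_p=H^2_{\mathbb{D}}(\mathcal{E})$ and $(V_1|_{\mathcal{H}_p},V_2|_{\mathcal{H}_p})=(M_{\varphi_1},M_{\varphi_2})$ with $\varphi_1(z)=U^*(P^\perp+zP)$, $\varphi_2(z)=(P+zP^\perp)U$, while $V_1|_{\mathcal{H}_u},V_2|_{\mathcal{H}_u}$ are commuting unitaries. This triple $(\mathcal{E},P,U)$ is called the BCL triple for $(V_1,V_2)$. *)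

theory Defs
  imports "HOL-Analysis.Analysis"
begin

text \<open>The distribution has no complex Hilbert spaces, so we introduce the class here.
  The inner product is linear in the second and conjugate-linear in the first argument.\<close>

class complex_inner = real_normed_vector +
  fixes scaleC :: "complex \<Rightarrow> 'a \<Rightarrow> 'a" (infixr \<open>*\<^sub>C\<close> 75)
    and cinner :: "'a \<Rightarrow> 'a \<Rightarrow> complex"
  assumes scaleC_add_right: "a *\<^sub>C (x + y) = a *\<^sub>C x + a *\<^sub>C y"
    and scaleC_add_left: "(a + b) *\<^sub>C x = a *\<^sub>C x + b *\<^sub>C x"
    and scaleC_scaleC: "a *\<^sub>C (b *\<^sub>C x) = (a * b) *\<^sub>C x"
    and scaleC_one: "1 *\<^sub>C x = x"
    and scaleR_scaleC: "scaleR r x = complex_of_real r *\<^sub>C x"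
    and cinner_add_right: "cinner x (y + z) = cinner x y + cinner x z"
    and cinner_scaleC_right: "cinner x (a *\<^sub>C y) = a * cinner x y"
    and cinner_commute: "cinner y x = cnj (cinner x y)"
    and cinner_norm: "cinner x x = complex_of_real ((norm x)\<^sup>2)"

class chilbert = complex_inner + complete_space

text \<open>Non-vacuity: the complex numbers form a Hilbert space.\<close>
instantiation complex :: chilbert
begin
definition scaleC_complex :: "complex \<Rightarrow> complex \<Rightarrow> complex" where
  "scaleC_complex a x = a * x"
definition cinner_complex :: "complex \<Rightarrow> complex \<Rightarrow> complex" where
  "cinner_complex x y = cnj x * y"
instance
proof
  fix a b :: complex and x y z :: complex and r :: real
  show "a *\<^sub>C (x + y) = a *\<^sub>C x + a *\<^sub>C y" by (simp add: scaleC_complex_def distrib_left)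
  show "(a + b) *\<^sub>C x = a *\<^sub>C x + b *\<^sub>C x" by (simp add: scaleC_complex_def distrib_right)
  show "a *\<^sub>C (b *\<^sub>C x) = (a * b) *\<^sub>C x" by (simp add: scaleC_complex_def)
  show "1 *\<^sub>C x = x" by (simp add: scaleC_complex_def)
  show "scaleR r x = complex_of_real r *\<^sub>C x" by (simp add: scaleC_complex_def scaleR_conv_of_real)
  show "cinner x (y + z) = cinner x y + cinner x z" by (simp add: cinner_complex_def distrib_left)
  show "cinner x (a *\<^sub>C y) = a * cinner x y" by (simp add: cinner_complex_def scaleC_complex_def)
  show "cinner y x = cnj (cinner x y)" by (simp add: cinner_complex_def mult.commute)
  show "cinner x x = complex_of_real ((norm x)\<^sup>2)" by (simp add: cinner_complex_def complex_norm_square mult.commute del: of_real_power)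
qed
end

definition clinear :: "('a::complex_inner \<Rightarrow> 'b::complex_inner) \<Rightarrow> bool" where
  "clinear A \<longleftrightarrow> (\<forall>x y. A (x + y) = A x + A y) \<and> (\<forall>c x. A (c *\<^sub>C x) = c *\<^sub>C A x)"

definition bounded_op :: "('a::complex_inner \<Rightarrow> 'b::complex_inner) \<Rightarrow> bool" where
  "bounded_op A \<longleftrightarrow> clinear A \<and> (\<exists>K. \<forall>x. norm (A x) \<le> K * norm x)"

text \<open>Hilbert-space adjoint (exists and is unique for bounded operators on Hilbert spaces).\<close>
definition adj :: "('a::complex_inner \<Rightarrow> 'b::complex_inner) \<Rightarrow> 'b \<Rightarrow> 'a" where
  "adj A = (SOME B. \<forall>x y. cinner (A x) y = cinner x (B y))"

definition isometry :: "('a::complex_inner \<Rightarrow> 'a) \<Rightarrow> bool" where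
  "isometry V \<longleftrightarrow> bounded_op V \<and> (\<forall>x y. cinner (V x) (V y) = cinner x y)"

definition unitary :: "('a::complex_inner \<Rightarrow> 'a) \<Rightarrow> bool" where
  "unitary U \<longleftrightarrow> isometry U \<and> surj U"

definition orth_proj :: "('a::complex_inner \<Rightarrow> 'a) \<Rightarrow> bool" where
  "orth_proj P \<longleftrightarrow> bounded_op P \<and> (\<forall>x. P (P x) = P x) \<and> (\<forall>x y. cinner (P x) y = cinner x (P y))"

definition defect_op :: "('a::complex_inner \<Rightarrow> 'a) \<Rightarrow> ('a \<Rightarrow> 'a) \<Rightarrow> 'a \<Rightarrow> 'a" where
  "defect_op V1 V2 x = x - V1 (adj V1 x) - V2 (adj V2 x) + V1 (V2 (adj V2 (adj V1 x)))"

definition csubspace :: "'a::complex_inner set \<Rightarrow> bool" where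
  "csubspace S \<longleftrightarrow> 0 \<in> S \<and> (\<forall>x\<in>S. \<forall>y\<in>S. x + y \<in> S) \<and> (\<forall>c. \<forall>x\<in>S. c *\<^sub>C x \<in> S)"

definition closed_subspace :: "'a::complex_inner set \<Rightarrow> bool" where
  "closed_subspace S \<longleftrightarrow> csubspace S \<and> closed S"

definition unitary_on :: "'a::complex_inner set \<Rightarrow> ('a \<Rightarrow> 'a) \<Rightarrow> bool" where
  "unitary_on K W \<longleftrightarrow> W ` K = K \<and>
     (\<forall>x\<in>K. \<forall>y\<in>K. W (x + y) = W x + W y) \<and> (\<forall>c. \<forall>x\<in>K. W (c *\<^sub>C x) = c *\<^sub>C W x) \<and>
     (\<forall>x\<in>K. \<forall>y\<in>K. cinner (W x) (W y) = cinner x y)"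

text \<open>\<open>H^2_D(S)\<close> for a closed subspace \<open>S\<close> of a Hilbert space, realised (via Taylor
  coefficients, a unitary identification) as the square-summable \<open>S\<close>-valued sequences.
  Multiplication by \<open>z\<close> is the unilateral shift; a constant operator \<open>A\<close> acts
  coefficientwise (\<open>I \<otimes> A\<close>).\<close>

definition H2 :: "'e::complex_inner set \<Rightarrow> (nat \<Rightarrow> 'e) set" where
  "H2 S = {f. (\<forall>n. f n \<in> S) \<and> summable (\<lambda>n. (norm (f n))\<^sup>2)}"

definition h2_inner :: "(nat \<Rightarrow> 'e::complex_inner) \<Rightarrow> (nat \<Rightarrow> 'e) \<Rightarrow> complex" where
  "h2_inner f g = (\<Sum>n. cinner (f n) (g n))"

definition Mz :: "(nat \<Rightarrow> 'e::complex_inner) \<Rightarrow> nat \<Rightarrow> 'e" where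
  "Mz f n = (case n of 0 \<Rightarrow> 0 | Suc m \<Rightarrow> f m)"

definition coeffwise :: "('e \<Rightarrow> 'e) \<Rightarrow> (nat \<Rightarrow> 'e) \<Rightarrow> nat \<Rightarrow> 'e" where
  "coeffwise A f n = A (f n)"

definition seq_add :: "(nat \<Rightarrow> 'e::complex_inner) \<Rightarrow> (nat \<Rightarrow> 'e) \<Rightarrow> nat \<Rightarrow> 'e" where
  "seq_add f g n = f n + g n"

definition seq_scale :: "complex \<Rightarrow> (nat \<Rightarrow> 'e::complex_inner) \<Rightarrow> nat \<Rightarrow> 'e" where
  "seq_scale c f n = c *\<^sub>C f n"

text \<open>Multiplication operators with the BCL symbols
  \<open>\<phi>1(z) = U*(P\<^sup>\<bottom> + zP)\<close> and \<open>\<phi>2(z) = (P + zP\<^sup>\<bottom>)U\<close>.\<close>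
definition M_phi1 :: "('e::complex_inner \<Rightarrow> 'e) \<Rightarrow> ('e \<Rightarrow> 'e) \<Rightarrow> (nat \<Rightarrow> 'e) \<Rightarrow> nat \<Rightarrow> 'e" where
  "M_phi1 P U f n = adj U ((f n - P (f n)) + P (Mz f n))"

definition M_phi2 :: "('e::complex_inner \<Rightarrow> 'e) \<Rightarrow> ('e \<Rightarrow> 'e) \<Rightarrow> (nat \<Rightarrow> 'e) \<Rightarrow> nat \<Rightarrow> 'e" where
  "M_phi2 P U f n = P (U (f n)) + (U (Mz f n) - P (U (Mz f n)))"

text \<open>\<open>(E,P,U)\<close> (with \<open>E\<close> the Hilbert space \<open>'e\<close>) is a BCL triple for \<open>(V1,V2)\<close> on
  \<open>'h\<close>: \<open>P\<close> is a projection, \<open>U\<close> a unitary on \<open>E\<close>, and \<open>'h = Hp \<oplus> Hu\<close> with both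
  summands reducing, \<open>(V1|Hp, V2|Hp)\<close> unitarily equivalent (via \<open>\<Phi>\<close>) to
  \<open>(M_\<phi>1, M_\<phi>2)\<close> on \<open>H^2(E)\<close>, and \<open>V1|Hu, V2|Hu\<close> unitaries.\<close>
definition BCL_triple ::
  "('h::chilbert \<Rightarrow> 'h) \<Rightarrow> ('h \<Rightarrow> 'h) \<Rightarrow> ('e::chilbert \<Rightarrow> 'e) \<Rightarrow> ('e \<Rightarrow> 'e) \<Rightarrow> bool" where
  "BCL_triple V1 V2 P U \<longleftrightarrow> orth_proj P \<and> unitary U \<and>
    (\<exists>Hp Hu (\<Phi> :: (nat \<Rightarrow> 'e) \<Rightarrow> 'h).
       closed_subspace Hp \<and> closed_subspace Hu \<and>
       (\<forall>a\<in>Hp. \<forall>b\<in>Hu. cinner a b = 0) \<and> (\<forall>x. \<exists>a\<in>Hp. \<exists>b\<in>Hu. x = a + b) \<and>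
       V1 ` Hp \<subseteq> Hp \<and> V2 ` Hp \<subseteq> Hp \<and> adj V1 ` Hp \<subseteq> Hp \<and> adj V2 ` Hp \<subseteq> Hp \<and>
       V1 ` Hu \<subseteq> Hu \<and> V2 ` Hu \<subseteq> Hu \<and> adj V1 ` Hu \<subseteq> Hu \<and> adj V2 ` Hu \<subseteq> Hu \<and>
       bij_betw \<Phi> (H2 UNIV) Hp \<and>
       (\<forall>f\<in>H2 UNIV. \<forall>g\<in>H2 UNIV. \<Phi> (seq_add f g) = \<Phi> f + \<Phi> g) \<and>
       (\<forall>c. \<forall>f\<in>H2 UNIV. \<Phi> (seq_scale c f) = c *\<^sub>C \<Phi> f) \<and>
       (\<forall>f\<in>H2 UNIV. \<forall>g\<in>H2 UNIV. cinner (\<Phi> f) (\<Phi> g) = h2_inner f g) \<and>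
       (\<forall>f\<in>H2 UNIV. V1 (\<Phi> f) = \<Phi> (M_phi1 P U f)) \<and>
       (\<forall>f\<in>H2 UNIV. V2 (\<Phi> f) = \<Phi> (M_phi2 P U f)) \<and>
       unitary_on Hu V1 \<and> unitary_on Hu V2)"

text \<open>Inner product and linear operations on
  \<open>(H^2 \<otimes> E1) \<oplus> (H^2 \<otimes> E2) \<oplus> K\<close>, elements represented as triples.\<close>
definition inner3 ::
  "(nat \<Rightarrow> 'e::complex_inner) \<times> (nat \<Rightarrow> 'e) \<times> 'k::complex_inner \<Rightarrow>
   (nat \<Rightarrow> 'e) \<times> (nat \<Rightarrow> 'e) \<times> 'k \<Rightarrow> complex" where
  "inner3 x y = (case x of (f1, f2, k) \<Rightarrow> case y of (g1, g2, l) \<Rightarrow>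
      h2_inner f1 g1 + h2_inner f2 g2 + cinner k l)"

definition add3 ::
  "(nat \<Rightarrow> 'e::complex_inner) \<times> (nat \<Rightarrow> 'e) \<times> 'k::complex_inner \<Rightarrow>
   (nat \<Rightarrow> 'e) \<times> (nat \<Rightarrow> 'e) \<times> 'k \<Rightarrow> (nat \<Rightarrow> 'e) \<times> (nat \<Rightarrow> 'e) \<times> 'k" where
  "add3 x y = (case x of (f1, f2, k) \<Rightarrow> case y of (g1, g2, l) \<Rightarrow>
      (seq_add f1 g1, seq_add f2 g2, k + l))"

definition scale3 ::
  "complex \<Rightarrow> (nat \<Rightarrow> 'e::complex_inner) \<times> (nat \<Rightarrow> 'e) \<times> 'k::complex_inner \<Rightarrow>
   (nat \<Rightarrow> 'e) \<times> (nat \<Rightarrow> 'e) \<times> 'k" where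
  "scale3 c x = (case x of (f1, f2, k) \<Rightarrow> (seq_scale c f1, seq_scale c f2, c *\<^sub>C k))"

definition unitary3 ::
  "((nat \<Rightarrow> 'e::complex_inner) \<times> (nat \<Rightarrow> 'e) \<times> 'k::complex_inner) set \<Rightarrow>
   ((nat \<Rightarrow> 'e) \<times> (nat \<Rightarrow> 'e) \<times> 'k \<Rightarrow> 'h::complex_inner) \<Rightarrow> bool" where
  "unitary3 D \<Psi> \<longleftrightarrow> bij_betw \<Psi> D UNIV \<and>
     (\<forall>x\<in>D. \<forall>y\<in>D. \<Psi> (add3 x y) = \<Psi> x + \<Psi> y) \<and>
     (\<forall>c. \<forall>x\<in>D. \<Psi> (scale3 c x) = c *\<^sub>C \<Psi> x) \<and>
     (\<forall>x\<in>D. \<forall>y\<in>D. cinner (\<Psi> x) (\<Psi> y) = inner3 x y)"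

end

theory Submission
  imports Defs
begin

text \<open>Write \<open>Q = I - P\<close>. In the BCL model \<open>V1\<close> and \<open>V2\<close> act on the Hardy part \<open>H2(E)\<close> as
  multiplication by \<open>U*(Q + zP)\<close> and \<open>(P + zQ)U\<close>, and as unitaries on the rest. Evaluating the
  defect operator at a constant function \<open>e\<close> gives the constant \<open>Qe - U*QUe\<close>, so defect zero
  forces \<open>U\<close> to commute with \<open>P\<close>; hence \<open>U\<close> reduces \<open>ran P\<close> and \<open>ran Q\<close>. Once it does, the map
  \<open>(f1, f2) \<mapsto> \<Sum>\<^sub>n (U*\<^sup>n f1\<^sub>n + U\<^sup>n f2\<^sub>n) z\<^sup>n\<close> from \<open>H2(ran P) \<oplus> H2(ran Q)\<close> onto \<open>H2(E)\<close> is
  unitary and conjugates the two symbols into \<open>z \<oplus> U*\<close> and \<open>U \<oplus> z\<close>; the unitary part of the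
  BCL decomposition supplies \<open>K\<close>, \<open>W1\<close> and \<open>W2\<close>.\<close>

section \<open>Complex inner product spaces\<close>

lemma cinner_add_left: "cinner (x + y) z = cinner x z + cinner y z"
  for x y z :: "'a::complex_inner"
  by (metis cinner_commute cinner_add_right complex_cnj_add)

lemma cinner_zero_right [simp]: "cinner x 0 = 0"
  for x :: "'a::complex_inner"
  using cinner_add_right[of x 0 0] by simp

lemma cinner_zero_left [simp]: "cinner 0 x = 0"
  for x :: "'a::complex_inner"
  using cinner_add_left[of 0 0 x] by simp

lemma cinner_diff_right: "cinner x (y - z) = cinner x y - cinner x z"
  for x y z :: "'a::complex_inner"
  using cinner_add_right[of x "y - z" z] by (simp add: algebra_simps)

lemma cinner_diff_left: "cinner (x - y) z = cinner x z - cinner y z"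
  for x y z :: "'a::complex_inner"
  using cinner_add_left[of "x - y" y z] by (simp add: algebra_simps)

lemma cinner_scaleC_left: "cinner (a *\<^sub>C x) y = cnj a * cinner x y"
  for x y :: "'a::complex_inner"
  by (metis cinner_commute cinner_scaleC_right complex_cnj_mult)

lemma cinner_eq_zero_iff [simp]: "cinner x x = 0 \<longleftrightarrow> x = 0"
  for x :: "'a::complex_inner"
  by (simp add: cinner_norm)

lemma cinner_eq_zero_commute: "cinner x y = 0 \<Longrightarrow> cinner y x = 0"
  for x y :: "'a::complex_inner"
  by (metis cinner_commute complex_cnj_zero)

lemma cinner_add_orthogonal:
  "cinner a b' = 0 \<Longrightarrow> cinner b a' = 0 \<Longrightarrow> cinner (a + b) (a' + b') = cinner a a' + cinner b b'"
  for a b a' b' :: "'a::complex_inner"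
  by (simp add: cinner_add_left cinner_add_right)

lemma norm_square_eq_Re_cinner: "(norm x)\<^sup>2 = Re (cinner x x)"
  for x :: "'a::complex_inner"
  by (simp add: cinner_norm)

lemma norm_add_square:
  "(norm (x + y))\<^sup>2 = (norm x)\<^sup>2 + (norm y)\<^sup>2 + 2 * Re (cinner x y)"
  for x y :: "'a::complex_inner"
proof -
  have "Re (cinner y x) = Re (cinner x y)"
    by (subst cinner_commute) simp
  then show ?thesis
    by (simp add: norm_square_eq_Re_cinner cinner_add_left cinner_add_right)
qed

lemma norm_scaleC_unimodular: "cmod c = 1 \<Longrightarrow> norm (c *\<^sub>C x) = norm x"
  for x :: "'a::complex_inner"
proof -
  assume "cmod c = 1"
  then have "cnj c * c = 1"
    by (metis complex_norm_square mult.commute of_real_1 power_one)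
  moreover have "cinner (c *\<^sub>C x) (c *\<^sub>C x) = (cnj c * c) * cinner x x"
    by (simp add: cinner_scaleC_left cinner_scaleC_right mult.assoc)
  ultimately have "(norm (c *\<^sub>C x))\<^sup>2 = (norm x)\<^sup>2"
    by (simp add: norm_square_eq_Re_cinner)
  then show ?thesis
    by simp
qed

lemma cmod_cinner_le: "cmod (cinner x y) \<le> (norm x)\<^sup>2 + (norm y)\<^sup>2"
  for x y :: "'a::complex_inner"
proof -
  let ?z = "cinner x y" and ?S = "(norm x)\<^sup>2 + (norm y)\<^sup>2"
  have Re_le: "- 2 * Re (c * ?z) \<le> ?S" if "cmod c = 1" for c
  proof -
    have "0 \<le> (norm (x + c *\<^sub>C y))\<^sup>2"
      by simp
    also have "\<dots> = ?S + 2 * Re (c * ?z)"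
      by (simp add: norm_add_square cinner_scaleC_right norm_scaleC_unimodular[OF that])
    finally show ?thesis
      by simp
  qed
  \<comment> \<open>the four unimodular factors \<open>\<plusminus>1, \<plusminus>\<i>\<close> bound \<open>\<bar>Re ?z\<bar>\<close> and \<open>\<bar>Im ?z\<bar>\<close> by \<open>?S/2\<close>\<close>
  have "2 * \<bar>Re ?z\<bar> \<le> ?S" "2 * \<bar>Im ?z\<bar> \<le> ?S"
    using Re_le[of 1] Re_le[of "-1"] Re_le[of \<i>] Re_le[of "-\<i>"] by auto
  with cmod_le[of ?z] show ?thesis
    by linarith
qed

lemma summable_cinner:
  assumes "summable (\<lambda>n. (norm (f n))\<^sup>2)" and "summable (\<lambda>n. (norm (g n))\<^sup>2)"
  shows "summable (\<lambda>n. cinner (f n) (g n :: 'a::complex_inner))"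
  by (rule summable_comparison_test'[OF summable_add[OF assms], of 0]) (rule cmod_cinner_le)

lemma summable_norm_square_le_add:
  fixes F :: "nat \<Rightarrow> 'a::real_normed_vector"
  assumes "summable (\<lambda>n. (norm (a n))\<^sup>2)" and "summable (\<lambda>n. (norm (b n))\<^sup>2)"
    and "\<And>n. norm (F n) \<le> norm (a n) + norm (b n)"
  shows "summable (\<lambda>n. (norm (F n))\<^sup>2)"
proof (rule summable_comparison_test'[of "\<lambda>n. 2 * (norm (a n))\<^sup>2 + 2 * (norm (b n))\<^sup>2" 0])
  show "summable (\<lambda>n. 2 * (norm (a n))\<^sup>2 + 2 * (norm (b n))\<^sup>2)"
    using assms(1,2) by (intro summable_add summable_mult)
  fix n
  have "(norm (F n))\<^sup>2 \<le> (norm (a n) + norm (b n))\<^sup>2"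
    using assms(3)[of n] by (simp add: power_mono)
  also have "\<dots> \<le> 2 * (norm (a n))\<^sup>2 + 2 * (norm (b n))\<^sup>2"
    by (smt (verit) sum_squares_bound power2_sum)
  finally show "norm ((norm (F n))\<^sup>2) \<le> 2 * (norm (a n))\<^sup>2 + 2 * (norm (b n))\<^sup>2"
    by simp
qed

lemma scaleC_minus_one: "(-1) *\<^sub>C x = - x"
  for x :: "'a::complex_inner"
  using scaleR_scaleC[of "-1" x] by simp

lemma csubspace_diff: "csubspace S \<Longrightarrow> x \<in> S \<Longrightarrow> y \<in> S \<Longrightarrow> x - y \<in> S"
  unfolding csubspace_def by (metis diff_conv_add_uminus scaleC_minus_one)

section \<open>Operators\<close>

lemma funpow_commute: "(\<And>x. f (g x) = g (f x)) \<Longrightarrow> f ((g ^^ n) x) = (g ^^ n) (f x)"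
  by (induction n) auto

lemma funpow_left_inverse: "(\<And>x. f (g x) = x) \<Longrightarrow> (f ^^ n) ((g ^^ n) x) = x"
  for f g :: "'a \<Rightarrow> 'a"
proof (induction n arbitrary: x)
  case (Suc n)
  have "(f ^^ Suc n) ((g ^^ Suc n) x) = (f ^^ n) (f (g ((g ^^ n) x)))"
    by (simp add: funpow_swap1)
  then show ?case
    using Suc by simp
qed simp

lemma adj_eqI:
  fixes T :: "'a::complex_inner \<Rightarrow> 'b::complex_inner"
  assumes adjoint: "\<And>x y. cinner (T x) y = cinner x (B y)"
  shows "adj T = B"
proof
  fix y
  have adj_T: "\<forall>x y. cinner (T x) y = cinner x (adj T y)"
    unfolding adj_def by (rule someI[where x = B]) (simp add: adjoint)
  define d where "d = adj T y - B y"
  have "cinner d d = cinner (T d) y - cinner (T d) y"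
    unfolding d_def cinner_diff_right adjoint adj_T[rule_format, symmetric] ..
  then show "adj T y = B y"
    by (simp add: d_def)
qed

lemma clinear_add: "clinear A \<Longrightarrow> A (x + y) = A x + A y"
  by (simp add: clinear_def)

lemma clinear_scaleC: "clinear A \<Longrightarrow> A (c *\<^sub>C x) = c *\<^sub>C A x"
  by (simp add: clinear_def)

lemma clinear_0: "clinear A \<Longrightarrow> A 0 = 0"
  using clinear_add[of A 0 0] by simp

lemma clinear_diff: "clinear A \<Longrightarrow> A (x - y) = A x - A y"
  using clinear_add[of A "x - y" y] by (simp add: algebra_simps)

lemma norm_eq_if_cinner_eq: "cinner y y = cinner x x \<Longrightarrow> norm y = norm x"
  for x y :: "'a::complex_inner"
proof -
  assume "cinner y y = cinner x x"
  then have "(norm y)\<^sup>2 = (norm x)\<^sup>2"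
    by (simp add: norm_square_eq_Re_cinner)
  then show ?thesis
    by (simp add: power2_eq_iff_nonneg)
qed

lemma isometry_iff: "isometry V \<longleftrightarrow> clinear V \<and> (\<forall>x y. cinner (V x) (V y) = cinner x y)"
proof
  assume V: "clinear V \<and> (\<forall>x y. cinner (V x) (V y) = cinner x y)"
  then have "norm (V x) = norm x" for x
    by (intro norm_eq_if_cinner_eq) simp
  with V show "isometry V"
    unfolding isometry_def bounded_op_def by (auto intro: exI[of _ 1])
qed (simp add: isometry_def bounded_op_def)

lemma isometry_clinear: "isometry V \<Longrightarrow> clinear V"
  by (simp add: isometry_iff)

lemma isometry_cinner: "isometry V \<Longrightarrow> cinner (V x) (V y) = cinner x y"
  by (simp add: isometry_iff)

lemma isometry_norm: "isometry V \<Longrightarrow> norm (V x) = norm x"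
  by (rule norm_eq_if_cinner_eq) (simp add: isometry_def)

lemma isometry_inj: "isometry V \<Longrightarrow> inj V"
proof (rule injI)
  fix x y
  assume V: "isometry V" and "V x = V y"
  then have "norm (V (x - y)) = 0"
    by (simp add: clinear_diff isometry_clinear)
  then show "x = y"
    by (simp add: isometry_norm[OF V])
qed

lemma unitary_clinear: "unitary U \<Longrightarrow> clinear U"
  by (simp add: unitary_def isometry_clinear)

lemma unitary_cinner [simp]: "unitary U \<Longrightarrow> cinner (U x) (U y) = cinner x y"
  by (simp add: unitary_def isometry_cinner)

lemma unitary_0 [simp]: "unitary U \<Longrightarrow> U 0 = 0"
  by (simp add: unitary_clinear clinear_0)

lemma unitary_norm [simp]: "unitary U \<Longrightarrow> norm (U x) = norm x"
  by (simp add: unitary_def isometry_norm)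

lemma unitary_adj_eq_inv: "unitary U \<Longrightarrow> adj U = inv U"
  by (rule adj_eqI) (metis unitary_cinner unitary_def surj_f_inv_f)

lemma unitary_apply_adj [simp]: "unitary U \<Longrightarrow> U (adj U x) = x"
  by (simp add: unitary_adj_eq_inv unitary_def surj_f_inv_f)

lemma unitary_adj_apply [simp]: "unitary U \<Longrightarrow> adj U (U x) = x"
  by (simp add: unitary_adj_eq_inv unitary_def isometry_inj)

lemma unitary_cinner_adj: "unitary U \<Longrightarrow> cinner (U x) y = cinner x (adj U y)"
  by (metis unitary_apply_adj unitary_cinner)

lemma unitary_adj_cinner: "unitary U \<Longrightarrow> cinner (adj U x) y = cinner x (U y)"
  by (metis unitary_apply_adj unitary_cinner)

lemma unitary_adj [simp]:
  assumes U: "unitary U"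
  shows "unitary (adj U)"
  unfolding unitary_def[of "adj U"] isometry_iff clinear_def
proof (intro conjI allI)
  fix x y c
  show "adj U (x + y) = adj U x + adj U y"
    using U unitary_adj_apply[OF U, of "adj U x + adj U y"] by (simp add: unitary_clinear clinear_add)
  show "adj U (c *\<^sub>C x) = c *\<^sub>C adj U x"
    using U unitary_adj_apply[OF U, of "c *\<^sub>C adj U x"] by (simp add: unitary_clinear clinear_scaleC)
  show "cinner (adj U x) (adj U y) = cinner x y"
    by (metis U unitary_apply_adj unitary_cinner)
  show "surj (adj U)"
    by (metis U surjI unitary_adj_apply)
qed

lemma unitary_id: "unitary id"
  by (simp add: unitary_def isometry_iff clinear_def)

lemma unitary_comp: "unitary U \<Longrightarrow> unitary V \<Longrightarrow> unitary (U \<circ> V)"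
  unfolding unitary_def isometry_iff clinear_def using comp_surj[of V U] by (simp add: comp_def)

lemma unitary_funpow [simp]: "unitary U \<Longrightarrow> unitary (U ^^ n)"
  by (induction n) (simp_all add: unitary_id unitary_comp)

lemma orth_proj_clinear: "orth_proj P \<Longrightarrow> clinear P"
  by (simp add: orth_proj_def bounded_op_def)

lemma orth_proj_0 [simp]: "orth_proj P \<Longrightarrow> P 0 = 0"
  by (simp add: orth_proj_clinear clinear_0)

lemma orth_proj_idem [simp]: "orth_proj P \<Longrightarrow> P (P x) = P x"
  by (simp add: orth_proj_def)

lemma orth_proj_self_adjoint: "orth_proj P \<Longrightarrow> cinner (P x) y = cinner x (P y)"
  by (simp add: orth_proj_def)

lemma orth_proj_complement [simp]: "orth_proj P \<Longrightarrow> P (x - P x) = 0"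
  by (simp add: orth_proj_clinear clinear_diff)

lemma orth_proj_orthogonal: "orth_proj P \<Longrightarrow> P a = a \<Longrightarrow> P b = 0 \<Longrightarrow> cinner a b = 0"
  by (metis orth_proj_self_adjoint cinner_zero_right)

lemma norm_orth_proj_le:
  assumes "orth_proj P"
  shows "norm (P x) \<le> norm x" and "norm (x - P x) \<le> norm x"
proof -
  have "(norm x)\<^sup>2 = (norm (P x + (x - P x)))\<^sup>2"
    by simp
  also have "\<dots> = (norm (P x))\<^sup>2 + (norm (x - P x))\<^sup>2"
    unfolding norm_add_square using orth_proj_orthogonal[OF assms, of "P x" "x - P x"] assms
    by simp
  finally show "norm (P x) \<le> norm x" and "norm (x - P x) \<le> norm x"
    by (auto intro: power2_le_imp_le)
qed

lemma range_orth_proj: "orth_proj P \<Longrightarrow> x \<in> range P \<longleftrightarrow> P x = x"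
  by (metis orth_proj_idem rangeE rangeI)

lemma range_orth_proj_complement:
  assumes "orth_proj P"
  shows "x \<in> range (\<lambda>x. x - P x) \<longleftrightarrow> P x = 0"
proof
  assume "P x = 0"
  then have "x = x - P x"
    by simp
  then show "x \<in> range (\<lambda>x. x - P x)"
    by (rule range_eqI)
qed (use assms in auto)

lemma surj_commuting_image_range:
  assumes "surj U" and "\<And>x. f (U x) = U (f x)"
  shows "U ` range f = range f"
proof -
  have "U ` range f = range (\<lambda>x. f (U x))"
    by (simp add: image_image assms(2))
  also have "\<dots> = f ` range U"
    by (simp add: image_image)
  finally show ?thesis
    using assms(1) by simp
qed

section \<open>Vector-valued Hardy space\<close>

lemma Mz_0 [simp]: "Mz f 0 = 0"
  by (simp add: Mz_def)

lemma Mz_Suc [simp]: "Mz f (Suc n) = f n"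
  by (simp add: Mz_def)

lemma H2_UNIV_iff: "f \<in> H2 UNIV \<longleftrightarrow> summable (\<lambda>n. (norm (f n))\<^sup>2)"
  by (simp add: H2_def)

lemma H2_UNIV_norm_le_add:
  "a \<in> H2 UNIV \<Longrightarrow> b \<in> H2 UNIV \<Longrightarrow> (\<And>n. norm (F n) \<le> norm (a n) + norm (b n)) \<Longrightarrow> F \<in> H2 UNIV"
  unfolding H2_UNIV_iff by (rule summable_norm_square_le_add)

lemma H2_UNIV_norm_le:
  assumes "f \<in> H2 UNIV" and "\<And>n. norm (g n) \<le> norm (f n)"
  shows "g \<in> H2 UNIV"
proof (rule H2_UNIV_norm_le_add[OF assms(1,1)])
  show "norm (g n) \<le> norm (f n) + norm (f n)" for n
    using assms(2)[of n] norm_ge_zero[of "f n"] by linarith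
qed

lemma Mz_in_H2: "f \<in> H2 UNIV \<Longrightarrow> Mz f \<in> H2 UNIV"
  unfolding H2_UNIV_iff by (subst summable_Suc_iff[symmetric]) simp

lemma shift_in_H2: "f \<in> H2 UNIV \<Longrightarrow> (\<lambda>n. f (Suc n)) \<in> H2 UNIV"
  unfolding H2_UNIV_iff using summable_Suc_iff[of "\<lambda>n. (norm (f n))\<^sup>2"] by simp

lemma summable_cinner_H2: "f \<in> H2 UNIV \<Longrightarrow> g \<in> H2 UNIV \<Longrightarrow> summable (\<lambda>n. cinner (f n) (g n))"
  unfolding H2_UNIV_iff by (rule summable_cinner)

lemma suminf_cinner_Mz:
  assumes "f \<in> H2 UNIV" and "g \<in> H2 UNIV"
  shows "(\<Sum>n. cinner (Mz f n) (g n)) = (\<Sum>n. cinner (f n) (g (Suc n)))"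
  using suminf_split_head[OF summable_cinner_H2[OF Mz_in_H2 [OF assms(1)] assms(2)]] by simp

definition h2_const :: "'e \<Rightarrow> nat \<Rightarrow> 'e::zero" where
  "h2_const e n = (if n = 0 then e else 0)"

lemma h2_const_in_H2: "h2_const e \<in> H2 UNIV"
  unfolding H2_UNIV_iff by (rule summable_finite[of "{0}"]) (auto simp: h2_const_def)

lemma h2_const_0 [simp]: "h2_const 0 = (\<lambda>n. 0)"
  by (simp add: h2_const_def fun_eq_iff)

section \<open>The BCL symbols\<close>

definition twist :: "('e::complex_inner \<Rightarrow> 'e) \<Rightarrow> (nat \<Rightarrow> 'e) \<Rightarrow> (nat \<Rightarrow> 'e) \<Rightarrow> nat \<Rightarrow> 'e" where
  "twist U f1 f2 n = (adj U ^^ n) (f1 n) + (U ^^ n) (f2 n)"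

definition M_phi1_adj :: "('e::complex_inner \<Rightarrow> 'e) \<Rightarrow> ('e \<Rightarrow> 'e) \<Rightarrow> (nat \<Rightarrow> 'e) \<Rightarrow> nat \<Rightarrow> 'e" where
  "M_phi1_adj P U f n = (U (f n) - P (U (f n))) + P (U (f (Suc n)))"

definition M_phi2_adj :: "('e::complex_inner \<Rightarrow> 'e) \<Rightarrow> ('e \<Rightarrow> 'e) \<Rightarrow> (nat \<Rightarrow> 'e) \<Rightarrow> nat \<Rightarrow> 'e" where
  "M_phi2_adj P U f n = adj U (P (f n)) + adj U (f (Suc n) - P (f (Suc n)))"

locale bcl_symbol =
  fixes P U :: "'e::complex_inner \<Rightarrow> 'e"
  assumes orth_proj: "orth_proj P" and unitary: "unitary U"
begin

declare orth_proj [simp] unitary [simp]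

lemmas P_add = clinear_add[OF orth_proj_clinear[OF orth_proj]]
lemmas U_add = clinear_add[OF unitary_clinear[OF unitary]]
lemmas U_diff = clinear_diff[OF unitary_clinear[OF unitary]]
lemmas U_adj_add = clinear_add[OF unitary_clinear[OF unitary_adj[OF unitary]]]
lemmas U_adj_diff = clinear_diff[OF unitary_clinear[OF unitary_adj[OF unitary]]]

lemma norm_P_le [simp]: "norm (P x) \<le> norm x"
  and norm_Q_le [simp]: "norm (x - P x) \<le> norm x"
  by (simp_all add: norm_orth_proj_le)

lemma norm_PU_le [simp]: "norm (P (U x)) \<le> norm x"
  and norm_QU_le [simp]: "norm (U x - P (U x)) \<le> norm x"
  using norm_orth_proj_le[OF orth_proj, of "U x"] by simp_all

lemma H2_range_P_iff: "f \<in> H2 (range P) \<longleftrightarrow> (\<forall>n. P (f n) = f n) \<and> f \<in> H2 UNIV"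
  by (simp add: H2_def range_orth_proj)

lemma H2_range_Q_iff: "f \<in> H2 (range (\<lambda>x. x - P x)) \<longleftrightarrow> (\<forall>n. P (f n) = 0) \<and> f \<in> H2 UNIV"
  by (simp add: H2_def range_orth_proj_complement)

lemma funpow_U_adj [simp]: "(U ^^ n) ((adj U ^^ n) x) = x"
  and funpow_adj_U [simp]: "(adj U ^^ n) ((U ^^ n) x) = x"
  by (rule funpow_left_inverse; simp)+

lemma M_phi1_in_H2: "f \<in> H2 UNIV \<Longrightarrow> M_phi1 P U f \<in> H2 UNIV"
  by (rule H2_UNIV_norm_le_add[of f "Mz f"])
    (simp_all add: Mz_in_H2 M_phi1_def norm_triangle_mono)

lemma M_phi2_in_H2: "f \<in> H2 UNIV \<Longrightarrow> M_phi2 P U f \<in> H2 UNIV"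
  by (rule H2_UNIV_norm_le_add[of f "Mz f"])
    (simp_all add: Mz_in_H2 M_phi2_def norm_triangle_mono)

lemma M_phi1_adj_in_H2: "f \<in> H2 UNIV \<Longrightarrow> M_phi1_adj P U f \<in> H2 UNIV"
  by (rule H2_UNIV_norm_le_add[of f "\<lambda>n. f (Suc n)"])
    (simp_all add: shift_in_H2 M_phi1_adj_def norm_triangle_mono)

lemma M_phi2_adj_in_H2: "f \<in> H2 UNIV \<Longrightarrow> M_phi2_adj P U f \<in> H2 UNIV"
  by (rule H2_UNIV_norm_le_add[of f "\<lambda>n. f (Suc n)"])
    (simp_all add: shift_in_H2 M_phi2_adj_def norm_triangle_mono)

lemma h2_inner_M_phi1:
  assumes f: "f \<in> H2 UNIV" and g: "g \<in> H2 UNIV"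
  shows "h2_inner (M_phi1 P U g) f = h2_inner g (M_phi1_adj P U f)"
proof -
  have QUf: "(\<lambda>n. U (f n) - P (U (f n))) \<in> H2 UNIV" and PUf: "(\<lambda>n. P (U (f n))) \<in> H2 UNIV"
    by (auto intro!: H2_UNIV_norm_le[OF f])
  have "cinner (M_phi1 P U g n) (f n) =
      cinner (g n) (U (f n) - P (U (f n))) + cinner (Mz g n) (P (U (f n)))" for n
    by (simp add: M_phi1_def unitary_adj_cinner cinner_add_left cinner_diff_left cinner_diff_right
        orth_proj_self_adjoint)
  then have "h2_inner (M_phi1 P U g) f =
      (\<Sum>n. cinner (g n) (U (f n) - P (U (f n)))) + (\<Sum>n. cinner (Mz g n) (P (U (f n))))"
    unfolding h2_inner_def
    by (simp add: suminf_add summable_cinner_H2 g QUf Mz_in_H2 PUf)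
  also have "(\<Sum>n. cinner (Mz g n) (P (U (f n)))) = (\<Sum>n. cinner (g n) (P (U (f (Suc n)))))"
    by (rule suminf_cinner_Mz[OF g PUf])
  also have "(\<Sum>n. cinner (g n) (U (f n) - P (U (f n)))) + \<dots> = h2_inner g (M_phi1_adj P U f)"
    unfolding h2_inner_def M_phi1_adj_def cinner_add_right
    using shift_in_H2[OF PUf] by (simp add: suminf_add summable_cinner_H2 g QUf)
  finally show ?thesis .
qed

lemma h2_inner_M_phi2:
  assumes f: "f \<in> H2 UNIV" and g: "g \<in> H2 UNIV"
  shows "h2_inner (M_phi2 P U g) f = h2_inner g (M_phi2_adj P U f)"
proof -
  have UPf: "(\<lambda>n. adj U (P (f n))) \<in> H2 UNIV" and UQf: "(\<lambda>n. adj U (f n - P (f n))) \<in> H2 UNIV"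
    by (auto intro!: H2_UNIV_norm_le[OF f])
  have "cinner (M_phi2 P U g n) (f n) =
      cinner (g n) (adj U (P (f n))) + cinner (Mz g n) (adj U (f n - P (f n)))" for n
    by (simp add: M_phi2_def unitary_cinner_adj cinner_add_left cinner_diff_left cinner_diff_right
        orth_proj_self_adjoint U_adj_diff)
  then have "h2_inner (M_phi2 P U g) f =
      (\<Sum>n. cinner (g n) (adj U (P (f n)))) + (\<Sum>n. cinner (Mz g n) (adj U (f n - P (f n))))"
    unfolding h2_inner_def
    by (simp add: suminf_add summable_cinner_H2 g UPf Mz_in_H2 UQf)
  also have "(\<Sum>n. cinner (Mz g n) (adj U (f n - P (f n)))) =
      (\<Sum>n. cinner (g n) (adj U (f (Suc n) - P (f (Suc n)))))"
    by (rule suminf_cinner_Mz[OF g UQf])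
  also have "(\<Sum>n. cinner (g n) (adj U (P (f n)))) + \<dots> = h2_inner g (M_phi2_adj P U f)"
    unfolding h2_inner_def M_phi2_adj_def cinner_add_right
    using shift_in_H2[OF UQf] by (simp add: suminf_add summable_cinner_H2 g UPf)
  finally show ?thesis .
qed

lemma M_phi1_adj_const: "M_phi1_adj P U (h2_const e) = h2_const (U e - P (U e))"
  by (simp add: M_phi1_adj_def h2_const_def fun_eq_iff)

lemma M_phi2_adj_const: "M_phi2_adj P U (h2_const e) = h2_const (adj U (P e))"
  by (simp add: M_phi2_adj_def h2_const_def fun_eq_iff)

lemma M_phi1_const: "P a = 0 \<Longrightarrow> M_phi1 P U (h2_const a) = h2_const (adj U a)"
  by (simp add: M_phi1_def h2_const_def fun_eq_iff Mz_def split: nat.split)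

lemma M_phi2_const: "P (U b) = U b \<Longrightarrow> M_phi2 P U (h2_const b) = h2_const (U b)"
  by (simp add: M_phi2_def h2_const_def fun_eq_iff Mz_def split: nat.split)

lemma twist_in_H2: "f1 \<in> H2 UNIV \<Longrightarrow> f2 \<in> H2 UNIV \<Longrightarrow> twist U f1 f2 \<in> H2 UNIV"
  by (rule H2_UNIV_norm_le_add[of f1 f2]) (simp_all add: twist_def norm_triangle_mono)

lemma twist_seq_add:
  "twist U (seq_add f1 g1) (seq_add f2 g2) = seq_add (twist U f1 f2) (twist U g1 g2)"
  by (simp add: twist_def seq_add_def fun_eq_iff clinear_add unitary_clinear algebra_simps)

lemma twist_seq_scale: "twist U (seq_scale c f1) (seq_scale c f2) = seq_scale c (twist U f1 f2)"
  by (simp add: twist_def seq_scale_def fun_eq_iff clinear_scaleC unitary_clinear scaleC_add_right)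

end

locale commuting_bcl_symbol = bcl_symbol +
  assumes commute: "P (U x) = U (P x)"
begin

lemma P_adj_U: "P (adj U x) = adj U (P x)"
  by (metis commute unitary unitary_apply_adj unitary_adj_apply)

lemma P_funpow_U: "P ((U ^^ n) x) = (U ^^ n) (P x)"
  and P_funpow_adj_U: "P ((adj U ^^ n) x) = (adj U ^^ n) (P x)"
  by (rule funpow_commute; simp add: commute P_adj_U)+

lemma U_image_range_P: "U ` range P = range P"
  using unitary by (intro surj_commuting_image_range) (simp_all add: unitary_def commute)

lemma U_image_range_Q: "U ` range (\<lambda>x. x - P x) = range (\<lambda>x. x - P x)"
  using unitary by (intro surj_commuting_image_range) (simp_all add: unitary_def commute U_diff)

lemma P_twist:
  "(\<And>n. P (f1 n) = f1 n) \<Longrightarrow> (\<And>n. P (f2 n) = 0) \<Longrightarrow> P (twist U f1 f2 n) = (adj U ^^ n) (f1 n)"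
  by (simp add: twist_def P_add P_funpow_U P_funpow_adj_U)

lemma twist_inj:
  assumes "\<And>n. P (f1 n) = f1 n" "\<And>n. P (f2 n) = 0" "\<And>n. P (g1 n) = g1 n" "\<And>n. P (g2 n) = 0"
    and eq: "twist U f1 f2 = twist U g1 g2"
  shows "f1 = g1" and "f2 = g2"
proof -
  have "(adj U ^^ n) (f1 n) = (adj U ^^ n) (g1 n)" for n
    using P_twist[of f1 f2 n] P_twist[of g1 g2 n] assms by simp
  then show f1: "f1 = g1"
    by (metis funpow_U_adj ext)
  have "(U ^^ n) (f2 n) = (U ^^ n) (g2 n)" for n
    using fun_cong[OF eq, of n] by (simp add: twist_def f1)
  then show "f2 = g2"
    by (metis funpow_adj_U ext)
qed

lemma twist_surj:
  assumes h: "h \<in> H2 UNIV"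
  obtains f1 f2 where "f1 \<in> H2 (range P)" and "f2 \<in> H2 (range (\<lambda>x. x - P x))"
    and "twist U f1 f2 = h"
proof
  show "(\<lambda>n. (U ^^ n) (P (h n))) \<in> H2 (range P)"
    by (auto simp: H2_range_P_iff P_funpow_U intro!: H2_UNIV_norm_le[OF h])
  show "(\<lambda>n. (adj U ^^ n) (h n - P (h n))) \<in> H2 (range (\<lambda>x. x - P x))"
    by (auto simp: H2_range_Q_iff P_funpow_adj_U intro!: H2_UNIV_norm_le[OF h])
  show "twist U (\<lambda>n. (U ^^ n) (P (h n))) (\<lambda>n. (adj U ^^ n) (h n - P (h n))) = h"
    by (simp add: twist_def fun_eq_iff)
qed

lemma cinner_twist:
  assumes "P (f1 n) = f1 n" "P (f2 n) = 0" "P (g1 n) = g1 n" "P (g2 n) = 0"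
  shows "cinner (twist U f1 f2 n) (twist U g1 g2 n) = cinner (f1 n) (g1 n) + cinner (f2 n) (g2 n)"
proof -
  have "cinner ((adj U ^^ n) (f1 n)) ((U ^^ n) (g2 n)) = 0"
    by (rule orth_proj_orthogonal[OF orth_proj]) (simp_all add: P_funpow_U P_funpow_adj_U assms)
  moreover have "cinner ((U ^^ n) (f2 n)) ((adj U ^^ n) (g1 n)) = 0"
    by (rule cinner_eq_zero_commute, rule orth_proj_orthogonal[OF orth_proj])
      (simp_all add: P_funpow_U P_funpow_adj_U assms)
  ultimately show ?thesis
    unfolding twist_def by (simp add: cinner_add_orthogonal)
qed

lemma h2_inner_twist:
  assumes "f1 \<in> H2 (range P)" "f2 \<in> H2 (range (\<lambda>x. x - P x))"
    and "g1 \<in> H2 (range P)" "g2 \<in> H2 (range (\<lambda>x. x - P x))"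
  shows "h2_inner (twist U f1 f2) (twist U g1 g2) = h2_inner f1 g1 + h2_inner f2 g2"
  using assms unfolding h2_inner_def H2_range_P_iff H2_range_Q_iff
  by (simp add: cinner_twist suminf_add summable_cinner_H2)

lemma M_phi1_twist:
  assumes "\<And>n. P (f1 n) = f1 n" and "\<And>n. P (f2 n) = 0"
  shows "M_phi1 P U (twist U f1 f2) = twist U (Mz f1) (coeffwise (adj U) f2)"
proof
  fix n
  have P_T: "P (twist U f1 f2 m) = (adj U ^^ m) (f1 m)" for m
    by (rule P_twist[OF assms])
  show "M_phi1 P U (twist U f1 f2) n = twist U (Mz f1) (coeffwise (adj U) f2) n"
  proof (cases n)
    case 0
    then show ?thesis
      by (simp add: M_phi1_def P_T) (simp add: twist_def coeffwise_def)
  next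
    case (Suc m)
    then have "M_phi1 P U (twist U f1 f2) n = adj U (U ((U ^^ m) (f2 n)) + (adj U ^^ m) (f1 m))"
      by (simp add: M_phi1_def P_T) (simp add: twist_def)
    also have "\<dots> = (adj U ^^ Suc m) (f1 m) + (U ^^ m) (f2 n)"
      by (simp add: U_adj_add add.commute)
    also have "\<dots> = twist U (Mz f1) (coeffwise (adj U) f2) n"
      using Suc by (simp add: twist_def coeffwise_def funpow_Suc_right del: funpow.simps)
    finally show ?thesis .
  qed
qed

lemma M_phi2_twist:
  assumes "\<And>n. P (f1 n) = f1 n" and "\<And>n. P (f2 n) = 0"
  shows "M_phi2 P U (twist U f1 f2) = twist U (coeffwise U f1) (Mz f2)"
proof
  fix n
  have P_T: "P (twist U f1 f2 m) = (adj U ^^ m) (f1 m)" for m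
    by (rule P_twist[OF assms])
  show "M_phi2 P U (twist U f1 f2) n = twist U (coeffwise U f1) (Mz f2) n"
  proof (cases n)
    case 0
    then show ?thesis
      by (simp add: M_phi2_def commute P_T) (simp add: twist_def coeffwise_def)
  next
    case (Suc m)
    then have "M_phi2 P U (twist U f1 f2) n = U ((adj U ^^ Suc m) (f1 n)) + U ((U ^^ m) (f2 m))"
      by (simp add: M_phi2_def commute P_T) (simp add: twist_def U_add)
    also have "\<dots> = (adj U ^^ m) (f1 n) + (U ^^ Suc m) (f2 m)"
      by simp
    also have "\<dots> = twist U (coeffwise U f1) (Mz f2) n"
      using Suc by (simp add: twist_def coeffwise_def funpow_Suc_right del: funpow.simps)
    finally show ?thesis .
  qed
qed

end

section \<open>The BCL model\<close>

locale bcl_model = bcl_symbol P U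
  for P U :: "'e::chilbert \<Rightarrow> 'e" +
  fixes V1 V2 :: "'h::chilbert \<Rightarrow> 'h" and Hp Hu :: "'h set" and \<Phi> :: "(nat \<Rightarrow> 'e) \<Rightarrow> 'h"
  assumes isometry_V1: "isometry V1" and isometry_V2: "isometry V2"
    and closed_subspace_Hp: "closed_subspace Hp" and closed_subspace_Hu: "closed_subspace Hu"
    and orthogonal: "\<forall>a\<in>Hp. \<forall>b\<in>Hu. cinner a b = 0"
    and decomposition: "\<forall>x. \<exists>a\<in>Hp. \<exists>b\<in>Hu. x = a + b"
    and bij_Phi: "bij_betw \<Phi> (H2 UNIV) Hp"
    and Phi_add: "\<forall>f\<in>H2 UNIV. \<forall>g\<in>H2 UNIV. \<Phi> (seq_add f g) = \<Phi> f + \<Phi> g"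
    and Phi_scale: "\<forall>c. \<forall>f\<in>H2 UNIV. \<Phi> (seq_scale c f) = c *\<^sub>C \<Phi> f"
    and Phi_cinner: "\<forall>f\<in>H2 UNIV. \<forall>g\<in>H2 UNIV. cinner (\<Phi> f) (\<Phi> g) = h2_inner f g"
    and V1_Phi: "\<forall>f\<in>H2 UNIV. V1 (\<Phi> f) = \<Phi> (M_phi1 P U f)"
    and V2_Phi: "\<forall>f\<in>H2 UNIV. V2 (\<Phi> f) = \<Phi> (M_phi2 P U f)"
    and unitary_on_Hu_V1: "unitary_on Hu V1" and unitary_on_Hu_V2: "unitary_on Hu V2"
begin

lemma zero_in_Hu: "0 \<in> Hu"
  using closed_subspace_Hu by (simp add: closed_subspace_def csubspace_def)

lemma Phi_in_Hp: "f \<in> H2 UNIV \<Longrightarrow> \<Phi> f \<in> Hp"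
  using bij_Phi by (auto simp: bij_betw_def)

lemma Phi_inject: "f \<in> H2 UNIV \<Longrightarrow> g \<in> H2 UNIV \<Longrightarrow> \<Phi> f = \<Phi> g \<longleftrightarrow> f = g"
  using bij_Phi by (auto simp: bij_betw_def dest: inj_onD)

lemma Phi_zero: "\<Phi> (\<lambda>n. 0) = 0"
proof -
  have "(\<lambda>n. 0) \<in> H2 UNIV" and "seq_add (\<lambda>n. 0) (\<lambda>n. 0) = (\<lambda>n. 0 :: 'e)"
    by (simp_all add: H2_def seq_add_def fun_eq_iff)
  then have "\<Phi> (\<lambda>n. 0) = \<Phi> (\<lambda>n. 0) + \<Phi> (\<lambda>n. 0)"
    using Phi_add by metis
  then show ?thesis
    by simp
qed

lemma Phi_h2_const_add: "\<Phi> (h2_const (a + b)) = \<Phi> (h2_const a) + \<Phi> (h2_const b)"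
proof -
  have "h2_const (a + b) = seq_add (h2_const a) (h2_const b)"
    by (simp add: h2_const_def seq_add_def fun_eq_iff)
  then show ?thesis
    by (simp add: Phi_add h2_const_in_H2)
qed

lemma cinner_Hp_Hu_add:
  "a \<in> Hp \<Longrightarrow> a' \<in> Hp \<Longrightarrow> b \<in> Hu \<Longrightarrow> b' \<in> Hu \<Longrightarrow>
    cinner (a + b) (a' + b') = cinner a a' + cinner b b'"
  by (simp add: cinner_add_orthogonal orthogonal cinner_eq_zero_commute)

lemma decomposition_unique:
  assumes "a \<in> Hp" "a' \<in> Hp" "b \<in> Hu" "b' \<in> Hu" and "a + b = a' + b'"
  shows "a = a'"
proof -
  have "a - a' = b' - b"
    using assms(5) by (simp add: algebra_simps)
  moreover have "a - a' \<in> Hp" and "b' - b \<in> Hu"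
    using closed_subspace_Hp closed_subspace_Hu assms(1-4)
    by (simp_all add: closed_subspace_def csubspace_diff)
  ultimately have "cinner (a - a') (a - a') = 0"
    using orthogonal by simp
  then show ?thesis
    by simp
qed

definition coeffs :: "'h \<Rightarrow> nat \<Rightarrow> 'e" where
  "coeffs x = (SOME f. f \<in> H2 UNIV \<and> x - \<Phi> f \<in> Hu)"

lemma coeffs_in_H2: "coeffs x \<in> H2 UNIV"
  and diff_Phi_coeffs_in_Hu: "x - \<Phi> (coeffs x) \<in> Hu"
proof -
  obtain a b where "a \<in> Hp" "b \<in> Hu" "x = a + b"
    using decomposition by blast
  moreover from \<open>a \<in> Hp\<close> obtain f where "f \<in> H2 UNIV" "a = \<Phi> f"
    using bij_Phi by (auto simp: bij_betw_def)
  ultimately have "\<exists>f. f \<in> H2 UNIV \<and> x - \<Phi> f \<in> Hu"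
    by auto
  then show "coeffs x \<in> H2 UNIV" "x - \<Phi> (coeffs x) \<in> Hu"
    unfolding coeffs_def by (metis (no_types, lifting) someI_ex)+
qed

lemma coeffs_Phi_add:
  assumes "f \<in> H2 UNIV" and "b \<in> Hu"
  shows "coeffs (\<Phi> f + b) = f"
proof -
  let ?x = "\<Phi> f + b"
  have "\<Phi> (coeffs ?x) + (?x - \<Phi> (coeffs ?x)) = \<Phi> f + b"
    by simp
  then have "\<Phi> (coeffs ?x) = \<Phi> f"
    using decomposition_unique Phi_in_Hp coeffs_in_H2 diff_Phi_coeffs_in_Hu assms by blast
  then show ?thesis
    using Phi_inject coeffs_in_H2 assms(1) by blast
qed

text \<open>The adjoint is defined by choice, so it must be exhibited on the whole space: the
  adjoint symbol on the Hardy part and the inverse of \<open>V\<close> on \<open>Hu\<close>.\<close>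

lemma adj_eq_on_decomposition:
  assumes V: "isometry V" "unitary_on Hu V"
    and V_Phi: "\<And>f. f \<in> H2 UNIV \<Longrightarrow> V (\<Phi> f) = \<Phi> (M f)"
    and M: "\<And>f. f \<in> H2 UNIV \<Longrightarrow> M f \<in> H2 UNIV"
    and A: "\<And>f. f \<in> H2 UNIV \<Longrightarrow> A f \<in> H2 UNIV"
    and M_A: "\<And>f g. f \<in> H2 UNIV \<Longrightarrow> g \<in> H2 UNIV \<Longrightarrow> h2_inner (M g) f = h2_inner g (A f)"
  shows "adj V = (\<lambda>x. \<Phi> (A (coeffs x)) + inv_into Hu V (x - \<Phi> (coeffs x)))"
proof (rule adj_eqI)
  fix y x
  let ?V_inv = "inv_into Hu V"
  have V_Hu: "V ` Hu = Hu"
    using V(2) by (simp add: unitary_on_def)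
  define g c h b where "g = coeffs y" and "c = y - \<Phi> g" and "h = coeffs x" and "b = x - \<Phi> h"
  have "g \<in> H2 UNIV" "c \<in> Hu" "h \<in> H2 UNIV" "b \<in> Hu"
    by (simp_all add: g_def c_def h_def b_def coeffs_in_H2 diff_Phi_coeffs_in_Hu)
  moreover have "?V_inv b \<in> Hu" "V (?V_inv b) = b"
    using \<open>b \<in> Hu\<close> V_Hu by (metis inv_into_into, metis f_inv_into_f)
  moreover have "V c \<in> Hu"
    using \<open>c \<in> Hu\<close> V_Hu by blast
  moreover have "V y = \<Phi> (M g) + V c"
    unfolding c_def using \<open>g \<in> H2 UNIV\<close>
    by (simp add: clinear_diff[OF isometry_clinear[OF V(1)]] V_Phi)
  moreover have "x = \<Phi> h + V (?V_inv b)" and "y = \<Phi> g + c"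
    using \<open>V (?V_inv b) = b\<close> by (simp_all add: b_def c_def)
  ultimately have "cinner (V y) x = h2_inner (M g) h + cinner (V c) (V (?V_inv b))"
    by (simp add: cinner_Hp_Hu_add Phi_in_Hp M Phi_cinner)
  also have "\<dots> = h2_inner g (A h) + cinner c (?V_inv b)"
    using \<open>g \<in> H2 UNIV\<close> \<open>h \<in> H2 UNIV\<close> by (simp add: M_A isometry_cinner[OF V(1)])
  also have "\<dots> = cinner y (\<Phi> (A h) + ?V_inv b)"
    using \<open>y = \<Phi> g + c\<close> \<open>g \<in> H2 UNIV\<close> \<open>h \<in> H2 UNIV\<close> \<open>c \<in> Hu\<close> \<open>?V_inv b \<in> Hu\<close>
    by (simp add: cinner_Hp_Hu_add Phi_in_Hp A Phi_cinner)
  finally show "cinner (V y) x = cinner y (\<Phi> (A h) + ?V_inv b)" .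
qed

lemma adj_on_Phi:
  assumes V: "isometry V" "unitary_on Hu V"
    and V_Phi: "\<And>f. f \<in> H2 UNIV \<Longrightarrow> V (\<Phi> f) = \<Phi> (M f)"
    and M: "\<And>f. f \<in> H2 UNIV \<Longrightarrow> M f \<in> H2 UNIV"
    and A: "\<And>f. f \<in> H2 UNIV \<Longrightarrow> A f \<in> H2 UNIV"
    and M_A: "\<And>f g. f \<in> H2 UNIV \<Longrightarrow> g \<in> H2 UNIV \<Longrightarrow> h2_inner (M g) f = h2_inner g (A f)"
    and f: "f \<in> H2 UNIV"
  shows "adj V (\<Phi> f) = \<Phi> (A f)"
proof -
  have "inv_into Hu V 0 = 0"
  proof (rule inv_into_f_eq)
    show "inj_on V Hu"
      using isometry_inj[OF V(1)] by (rule inj_on_subset) simp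
    show "V 0 = 0"
      by (rule clinear_0[OF isometry_clinear[OF V(1)]])
  qed (rule zero_in_Hu)
  then show ?thesis
    using coeffs_Phi_add[OF f zero_in_Hu] adj_eq_on_decomposition[OF assms(1-6)] by simp
qed

lemma adj_V1_Phi: "f \<in> H2 UNIV \<Longrightarrow> adj V1 (\<Phi> f) = \<Phi> (M_phi1_adj P U f)"
  by (rule adj_on_Phi[OF isometry_V1 unitary_on_Hu_V1, where M = "M_phi1 P U"])
    (simp_all add: V1_Phi M_phi1_in_H2 M_phi1_adj_in_H2 h2_inner_M_phi1)

lemma adj_V2_Phi: "f \<in> H2 UNIV \<Longrightarrow> adj V2 (\<Phi> f) = \<Phi> (M_phi2_adj P U f)"
  by (rule adj_on_Phi[OF isometry_V2 unitary_on_Hu_V2, where M = "M_phi2 P U"])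
    (simp_all add: V2_Phi M_phi2_in_H2 M_phi2_adj_in_H2 h2_inner_M_phi2)

lemma defect_op_Phi_const:
  "defect_op V1 V2 (\<Phi> (h2_const e)) = \<Phi> (h2_const (e - P e - adj U (U e - P (U e))))"
proof -
  let ?a = "U e - P (U e)"
  have adj_V1: "adj V1 (\<Phi> (h2_const e)) = \<Phi> (h2_const ?a)"
    by (simp add: adj_V1_Phi h2_const_in_H2 M_phi1_adj_const)
  have "V1 (adj V1 (\<Phi> (h2_const e))) = \<Phi> (h2_const (adj U ?a))"
    by (simp add: adj_V1 V1_Phi h2_const_in_H2 M_phi1_const)
  moreover have "V2 (adj V2 (\<Phi> (h2_const e))) = \<Phi> (h2_const (P e))"
    by (simp add: adj_V2_Phi V2_Phi h2_const_in_H2 M_phi2_adj_const M_phi2_const)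
  moreover have "V1 (V2 (adj V2 (adj V1 (\<Phi> (h2_const e))))) = 0"
    by (simp add: adj_V1 adj_V2_Phi h2_const_in_H2 M_phi2_adj_const Phi_zero
        clinear_0 isometry_clinear isometry_V1 isometry_V2)
  moreover have "\<Phi> (h2_const e) =
      \<Phi> (h2_const (e - P e - adj U ?a)) + \<Phi> (h2_const (adj U ?a)) + \<Phi> (h2_const (P e))"
    by (simp flip: Phi_h2_const_add)
  ultimately show ?thesis
    by (simp add: defect_op_def)
qed

lemma commute_if_defect_zero:
  assumes "\<forall>x. defect_op V1 V2 x = 0"
  shows "P (U e) = U (P e)"
proof -
  have "\<Phi> (h2_const (e - P e - adj U (U e - P (U e)))) = \<Phi> (h2_const 0)"
    using assms defect_op_Phi_const[of e] by (simp add: Phi_zero)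
  then have "h2_const (e - P e - adj U (U e - P (U e))) 0 = h2_const 0 0"
    by (simp only: Phi_inject h2_const_in_H2)
  then have "U (e - P e) = U e - P (U e)"
    by (simp add: h2_const_def)
  then show ?thesis
    by (simp add: U_diff)
qed

end

locale commuting_bcl_model =
  bcl_model P U V1 V2 Hp Hu \<Phi> + commuting_bcl_symbol P U
  for P U :: "'e::chilbert \<Rightarrow> 'e" and V1 V2 :: "'h::chilbert \<Rightarrow> 'h"
    and Hp Hu :: "'h set" and \<Phi> :: "(nat \<Rightarrow> 'e) \<Rightarrow> 'h"
begin

abbreviation model_space :: "((nat \<Rightarrow> 'e) \<times> (nat \<Rightarrow> 'e) \<times> 'h) set" where
  "model_space \<equiv> H2 (range P) \<times> H2 (range (\<lambda>x. x - P x)) \<times> Hu"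

definition Psi :: "(nat \<Rightarrow> 'e) \<times> (nat \<Rightarrow> 'e) \<times> 'h \<Rightarrow> 'h" where
  "Psi = (\<lambda>(f1, f2, k). \<Phi> (twist U f1 f2) + k)"

lemma Psi_apply [simp]: "Psi (f1, f2, k) = \<Phi> (twist U f1 f2) + k"
  by (simp add: Psi_def)

lemma twist_in_H2_ranges:
  "f1 \<in> H2 (range P) \<Longrightarrow> f2 \<in> H2 (range (\<lambda>x. x - P x)) \<Longrightarrow> twist U f1 f2 \<in> H2 UNIV"
  by (simp add: twist_in_H2 H2_range_P_iff H2_range_Q_iff)

lemma inj_on_Psi: "inj_on Psi model_space"
proof (rule inj_onI)
  fix x y
  assume x: "x \<in> model_space" and y: "y \<in> model_space" and eq: "Psi x = Psi y"
  obtain f1 f2 k g1 g2 l where xy: "x = (f1, f2, k)" "y = (g1, g2, l)"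
    by (cases x, cases y) auto
  have f: "f1 \<in> H2 (range P)" "f2 \<in> H2 (range (\<lambda>x. x - P x))"
    and g: "g1 \<in> H2 (range P)" "g2 \<in> H2 (range (\<lambda>x. x - P x))"
    using x y by (simp_all add: xy)
  have "\<Phi> (twist U f1 f2) = \<Phi> (twist U g1 g2)"
    by (rule decomposition_unique[of _ _ k l])
      (use x y eq in \<open>simp_all add: xy Phi_in_Hp twist_in_H2_ranges\<close>)
  then have "twist U f1 f2 = twist U g1 g2"
    using Phi_inject f g twist_in_H2_ranges by blast
  with f g have "f1 = g1" "f2 = g2"
    by (auto intro: twist_inj simp: H2_range_P_iff H2_range_Q_iff)
  with eq show "x = y"
    by (simp add: xy)
qed

lemma Psi_surj: "Psi ` model_space = UNIV"
proof -
  have "x \<in> Psi ` model_space" for x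
  proof -
    obtain f1 f2 where "f1 \<in> H2 (range P)" "f2 \<in> H2 (range (\<lambda>x. x - P x))"
      and "twist U f1 f2 = coeffs x"
      using twist_surj coeffs_in_H2 by blast
    then show ?thesis
      using diff_Phi_coeffs_in_Hu[of x] by (intro image_eqI[where x = "(f1, f2, x - \<Phi> (coeffs x))"]) auto
  qed
  then show ?thesis
    by blast
qed

lemma Psi_add3:
  "f1 \<in> H2 (range P) \<Longrightarrow> f2 \<in> H2 (range (\<lambda>x. x - P x)) \<Longrightarrow>
   g1 \<in> H2 (range P) \<Longrightarrow> g2 \<in> H2 (range (\<lambda>x. x - P x)) \<Longrightarrow>
   Psi (add3 (f1, f2, k) (g1, g2, l)) = Psi (f1, f2, k) + Psi (g1, g2, l)"
  by (simp add: add3_def twist_seq_add Phi_add twist_in_H2_ranges algebra_simps)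

lemma Psi_scale3:
  "f1 \<in> H2 (range P) \<Longrightarrow> f2 \<in> H2 (range (\<lambda>x. x - P x)) \<Longrightarrow>
   Psi (scale3 c (f1, f2, k)) = c *\<^sub>C Psi (f1, f2, k)"
  by (simp add: scale3_def twist_seq_scale Phi_scale twist_in_H2_ranges scaleC_add_right)

lemma Psi_cinner:
  "f1 \<in> H2 (range P) \<Longrightarrow> f2 \<in> H2 (range (\<lambda>x. x - P x)) \<Longrightarrow> k \<in> Hu \<Longrightarrow>
   g1 \<in> H2 (range P) \<Longrightarrow> g2 \<in> H2 (range (\<lambda>x. x - P x)) \<Longrightarrow> l \<in> Hu \<Longrightarrow>
   cinner (Psi (f1, f2, k)) (Psi (g1, g2, l)) = inner3 (f1, f2, k) (g1, g2, l)"
  by (simp add: cinner_Hp_Hu_add Phi_in_Hp twist_in_H2_ranges Phi_cinner h2_inner_twist inner3_def)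

lemma unitary3_Psi: "unitary3 model_space Psi"
  unfolding unitary3_def bij_betw_def
  by (simp add: inj_on_Psi Psi_surj Psi_add3 Psi_scale3 Psi_cinner del: Psi_apply)

lemma V_Psi:
  assumes "f1 \<in> H2 (range P)" and "f2 \<in> H2 (range (\<lambda>x. x - P x))"
  shows "V1 (Psi (f1, f2, k)) = Psi (Mz f1, coeffwise (adj U) f2, V1 k)"
    and "V2 (Psi (f1, f2, k)) = Psi (coeffwise U f1, Mz f2, V2 k)"
  using assms twist_in_H2_ranges[OF assms]
  by (simp_all add: H2_range_P_iff H2_range_Q_iff clinear_add isometry_clinear isometry_V1
      isometry_V2 V1_Phi V2_Phi M_phi1_twist M_phi2_twist)

end

theorem theorem2p4:
  fixes V1 V2 :: "'h::chilbert \<Rightarrow> 'h"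
    and P U :: "'e::chilbert \<Rightarrow> 'e"
  assumes "isometry V1" and "isometry V2"
    and "\<forall>x. V1 (V2 x) = V2 (V1 x)"
    and "\<forall>x. defect_op V1 V2 x = 0"
    and "BCL_triple V1 V2 P U"
  shows "U ` range P = range P \<and> U ` range (\<lambda>x. x - P x) = range (\<lambda>x. x - P x) \<and>
    (\<exists>(K :: 'h set) W1 W2 (\<Psi> :: (nat \<Rightarrow> 'e) \<times> (nat \<Rightarrow> 'e) \<times> 'h \<Rightarrow> 'h).
       closed_subspace K \<and> unitary_on K W1 \<and> unitary_on K W2 \<and>
       (\<forall>k\<in>K. W1 (W2 k) = W2 (W1 k)) \<and>
       unitary3 (H2 (range P) \<times> H2 (range (\<lambda>x. x - P x)) \<times> K) \<Psi> \<and>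
       (\<forall>f1\<in>H2 (range P). \<forall>f2\<in>H2 (range (\<lambda>x. x - P x)). \<forall>k\<in>K.
          V1 (\<Psi> (f1, f2, k)) = \<Psi> (Mz f1, coeffwise (adj U) f2, W1 k) \<and>
          V2 (\<Psi> (f1, f2, k)) = \<Psi> (coeffwise U f1, Mz f2, W2 k)))"
proof -
  have "\<exists>Hp Hu (\<Phi> :: (nat \<Rightarrow> 'e) \<Rightarrow> 'h). bcl_model P U V1 V2 Hp Hu \<Phi>"
    using assms(1,2,5)
    unfolding BCL_triple_def bcl_model_def bcl_model_axioms_def bcl_symbol_def
    by (elim conjE exE) (intro exI conjI; assumption)
  then obtain Hp Hu and \<Phi> :: "(nat \<Rightarrow> 'e) \<Rightarrow> 'h" where "bcl_model P U V1 V2 Hp Hu \<Phi>"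
    by blast
  then interpret bcl_model P U V1 V2 Hp Hu \<Phi> .
  interpret commuting_bcl_model P U V1 V2 Hp Hu \<Phi>
    by unfold_locales (rule commute_if_defect_zero[OF assms(4)])
  show ?thesis
    using U_image_range_P U_image_range_Q closed_subspace_Hu unitary_on_Hu_V1 unitary_on_Hu_V2
      assms(3) unitary3_Psi V_Psi
    by (intro conjI exI[of _ Hu] exI[of _ V1] exI[of _ V2] exI[of _ Psi]) auto
qed

end
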